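(* Let $b_i,b_j\in\mathbb{Z}^2$ be linearly independent and lie in the interiors of opposite quadrants of $\mathbb{Z}^2$, let $\mathcal{B}[i,j]$ be the $2\times2$ matrix with rows $b_i,b_j$, and $c[i,j]=(c_i,c_j)\in\mathbb{C}^2$. Then the space of Puiseux polynomial solutions of $\mathrm{Horn}(\mathcal{B}[i,j],c[i,j])$ has dimension $\nu_{ij}=\min(|b_{i1}b_{j2}|,|b_{i2}b_{j1}|)$.
   Context: For an integer matrix $\mathcal{B}'$ with rows $b'_k=(b'_{k1},b'_{k2})$ and $c'$ a complex vector, $\mathrm{Horn}(\mathcal{B}',c')=D_2\langle H_1,H_2\rangle$, where $H_r=Q_r-y_rP_r$, $P_r=\prod_{k:b'_{kr}<0}\prod_{l=0}^{|b'_{kr}|-1}(b'_k\cdot\theta_y+c'_k-l)$, $Q_r=\prod_{k:b'_{kr}>0}\prod_{l=0}^{b'_{kr}-1}(b'_k\cdot\theta_y+c'_k-l)$, $b'_k\cdot\theta_y=b'_{k1}y_1\partial_{y_1}+b'_{k2}y_2\partial_{y_2}$; $D_2$ is the Weyl algebra in $y_1,y_2$. A Puiseux polynomial is a finite linear combination of monomials with complex exponents. *)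

theory Defs
  imports Complex_Main "HOL-Library.Function_Algebras"
begin

text \<open>Puiseux polynomials in y1, y2 with complex exponents are represented by their
coefficient functions: f (a1,a2) is the coefficient of y1^a1 y2^a2; a Puiseux polynomial
is such a function with finite support.\<close>

type_synonym puiseux = "complex \<times> complex \<Rightarrow> complex"

definition puiseux_poly :: "puiseux \<Rightarrow> bool" where
  "puiseux_poly f \<longleftrightarrow> finite {a. f a \<noteq> 0}"

text \<open>Euler operators theta_r = y_r d/dy_r and multiplication by y_r.\<close>
definition theta1 :: "puiseux \<Rightarrow> puiseux" where
  "theta1 f = (\<lambda>a. fst a * f a)"
definition theta2 :: "puiseux \<Rightarrow> puiseux" where
  "theta2 f = (\<lambda>a. snd a * f a)"
definition mult_y :: "nat \<Rightarrow> puiseux \<Rightarrow> puiseux" where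
  "mult_y r f = (\<lambda>a. if r = 1 then f (fst a - 1, snd a) else f (fst a, snd a - 1))"

definition lin_op :: "int \<times> int \<Rightarrow> complex \<Rightarrow> nat \<Rightarrow> puiseux \<Rightarrow> puiseux" where
  "lin_op b ck l f = (\<lambda>a. of_int (fst b) * theta1 f a + of_int (snd b) * theta2 f a
                          + (ck - of_nat l) * f a)"

definition comp_ops :: "(puiseux \<Rightarrow> puiseux) list \<Rightarrow> puiseux \<Rightarrow> puiseux" where
  "comp_ops ops = foldr (\<circ>) ops id"

definition col :: "nat \<Rightarrow> int \<times> int \<Rightarrow> int" where
  "col r b = (if r = 1 then fst b else snd b)"

text \<open>Matrix B' given by its list of rows, c' by a list of the same length.\<close>
definition Q_op :: "(int \<times> int) list \<Rightarrow> complex list \<Rightarrow> nat \<Rightarrow> puiseux \<Rightarrow> puiseux" where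
  "Q_op B c r = comp_ops (concat (map (\<lambda>k. map (\<lambda>l. lin_op (B ! k) (c ! k) l)
        [0..<nat (col r (B ! k))]) (filter (\<lambda>k. col r (B ! k) > 0) [0..<length B])))"

definition P_op :: "(int \<times> int) list \<Rightarrow> complex list \<Rightarrow> nat \<Rightarrow> puiseux \<Rightarrow> puiseux" where
  "P_op B c r = comp_ops (concat (map (\<lambda>k. map (\<lambda>l. lin_op (B ! k) (c ! k) l)
        [0..<nat (- col r (B ! k))]) (filter (\<lambda>k. col r (B ! k) < 0) [0..<length B])))"

definition H_op :: "(int \<times> int) list \<Rightarrow> complex list \<Rightarrow> nat \<Rightarrow> puiseux \<Rightarrow> puiseux" where
  "H_op B c r f = (\<lambda>a. Q_op B c r f a - mult_y r (P_op B c r f) a)"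

text \<open>Puiseux polynomial solutions of Horn(B',c') = D_2<H_1,H_2>: annihilated by the
generators (hence by the whole left ideal).\<close>
definition horn_puiseux_solutions :: "(int \<times> int) list \<Rightarrow> complex list \<Rightarrow> puiseux set" where
  "horn_puiseux_solutions B c =
     {f. puiseux_poly f \<and> H_op B c 1 f = (\<lambda>_. 0) \<and> H_op B c 2 f = (\<lambda>_. 0)}"

definition cdim :: "puiseux set \<Rightarrow> nat" where
  "cdim S = vector_space.dim (\<lambda>(z::complex) f. (\<lambda>a. z * f a)) S"

end

theory Submission
  imports Defs "HOL-Library.Product_Lexorder"
begin

text \<open>In the coordinates \<open>x = (b\<^sub>i \<cdot> a + c\<^sub>i, b\<^sub>j \<cdot> a + c\<^sub>j)\<close> of the exponent \<open>a\<close>, an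
  invertible affine change because \<open>b\<^sub>i\<close> and \<open>b\<^sub>j\<close> are independent, the two Horn operators become
  the recurrences
    \<open>(x\<^sub>1)\<^sub>p F(x) = (x\<^sub>2 + r)\<^sub>r F(x\<^sub>1 - p, x\<^sub>2 + r)\<close> and
    \<open>(x\<^sub>1)\<^sub>q F(x) = (x\<^sub>2 + s)\<^sub>s F(x\<^sub>1 - q, x\<^sub>2 + s)\<close>
  on the coefficients \<open>F\<close> of a solution, with falling factorials \<open>(x)\<^sub>m\<close> and
  \<open>p, r, q, s = |b\<^sub>i\<^sub>1|, |b\<^sub>j\<^sub>1|, |b\<^sub>i\<^sub>2|, |b\<^sub>j\<^sub>2|\<close>; that both columns give this shape is where
  the opposite quadrants are used. A finitely supported solution lives on \<open>\<nat>\<^sup>2\<close>, where the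
  recurrences just link points along the steps \<open>(-p, r)\<close> and \<open>(-q, s)\<close>. If \<open>p s < q r\<close>, the
  weight \<open>s u + q v\<close> grows along the first step and is constant along the second. Hence the
  component of the step graph through a point of the box \<open>[0, p) \<times> [0, s)\<close> is finite and meets
  the box only there, and a solution vanishing on the box vanishes. The coefficient functions equal
  to \<open>1 / (z\<^sub>1! z\<^sub>2!)\<close> on one such component and \<open>0\<close> elsewhere therefore form a basis, so the
  dimension is \<open>p s = min (p s) (q r)\<close>.\<close>

section \<open>Horn operators in adapted coordinates\<close>

definition falling_factorial :: "complex \<Rightarrow> nat \<Rightarrow> complex" where
  "falling_factorial x n = (\<Prod>l<n. x - of_nat l)"

lemma falling_factorial_Suc: "falling_factorial x (Suc n) = falling_factorial x n * (x - of_nat n)"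
  by (simp add: falling_factorial_def)

lemma falling_factorial_eq_0_iff: "falling_factorial x n = 0 \<longleftrightarrow> (\<exists>l<n. x = of_nat l)"
  by (auto simp: falling_factorial_def)

lemma falling_factorial_of_nat: "n \<le> k \<Longrightarrow> falling_factorial (of_nat k) n = fact k / fact (k - n)"
proof (induction n)
  case (Suc n)
  then have "fact (k - n) = (of_nat (k - n) :: complex) * fact (k - Suc n)"
    by (metis Suc_diff_Suc Suc_le_lessD fact_Suc)
  with Suc show ?case
    by (simp add: falling_factorial_Suc field_simps)
qed (simp add: falling_factorial_def)

definition int_dot :: "int \<times> int \<Rightarrow> complex \<times> complex \<Rightarrow> complex" where
  "int_dot b a = of_int (fst b) * fst a + of_int (snd b) * snd a"

definition unit_shift :: "nat \<Rightarrow> complex \<times> complex \<Rightarrow> complex \<times> complex" where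
  "unit_shift r a = (if r = 1 then (fst a - 1, snd a) else (fst a, snd a - 1))"

lemma int_dot_unit_shift: "int_dot b (unit_shift r a) = int_dot b a - of_int (col r b)"
  by (simp add: int_dot_def unit_shift_def col_def algebra_simps)

lemma lin_op_eq: "lin_op b c l f = (\<lambda>a. (int_dot b a + c - of_nat l) * f a)"
  by (simp add: lin_op_def theta1_def theta2_def int_dot_def fun_eq_iff algebra_simps)

lemma comp_ops_snoc: "comp_ops (gs @ [g]) = comp_ops gs \<circ> g"
  by (induction gs) (simp_all add: comp_ops_def)

lemma comp_ops_lin_op:
  "comp_ops (map (lin_op b c) [0..<n]) f = (\<lambda>a. falling_factorial (int_dot b a + c) n * f a)"
proof (induction n arbitrary: f)
  case (Suc n)
  have "comp_ops (map (lin_op b c) [0..<Suc n]) f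
      = comp_ops (map (lin_op b c) [0..<n]) (lin_op b c n f)"
    by (simp add: comp_ops_snoc)
  also have "\<dots> = (\<lambda>a. falling_factorial (int_dot b a + c) (Suc n) * f a)"
    by (simp add: Suc lin_op_eq falling_factorial_Suc algebra_simps)
  finally show ?case .
qed (simp add: comp_ops_def falling_factorial_def)

lemma Q_P_op_opposite_signs:
  assumes "col r b > 0" "col r b' < 0"
  shows "Q_op [b, b'] [c, c'] r f = (\<lambda>a. falling_factorial (int_dot b a + c) (nat (col r b)) * f a)"
    and "P_op [b, b'] [c, c'] r f
           = (\<lambda>a. falling_factorial (int_dot b' a + c') (nat (- col r b')) * f a)"
    and "Q_op [b', b] [c', c] r f = (\<lambda>a. falling_factorial (int_dot b a + c) (nat (col r b)) * f a)"
    and "P_op [b', b] [c', c] r f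
           = (\<lambda>a. falling_factorial (int_dot b' a + c') (nat (- col r b')) * f a)"
  using assms by (simp_all add: Q_op_def P_op_def comp_ops_lin_op)

lemma H_op_swap_rows:
  "col r b > 0 \<Longrightarrow> col r b' < 0 \<Longrightarrow> H_op [b', b] [c', c] r = H_op [b, b'] [c, c'] r"
  by (simp add: H_op_def Q_P_op_opposite_signs fun_eq_iff)

lemma H_op_eq_0_iff: "H_op B c r f = (\<lambda>_. 0) \<longleftrightarrow> (\<forall>a. Q_op B c r f a = P_op B c r f (unit_shift r a))"
  by (simp add: H_op_def mult_y_def unit_shift_def fun_eq_iff)

definition horn_coords ::
    "int \<times> int \<Rightarrow> int \<times> int \<Rightarrow> complex \<Rightarrow> complex \<Rightarrow> complex \<times> complex \<Rightarrow> complex \<times> complex"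
  where "horn_coords bi bj ci cj a = (int_dot bi a + ci, int_dot bj a + cj)"

lemma bij_horn_coords:
  assumes "fst bi * snd bj - snd bi * fst bj \<noteq> 0"
  shows "bij (horn_coords bi bj ci cj)"
proof (rule o_bij)
  define A B C E :: complex
    where "A = of_int (fst bi)" and "B = of_int (snd bi)"
      and "C = of_int (fst bj)" and "E = of_int (snd bj)"
  define d where "d = A * E - B * C"
  have "d \<noteq> 0"
  proof -
    have "d = of_int (fst bi * snd bj - snd bi * fst bj)"
      by (simp add: d_def A_def B_def C_def E_def)
    with assms show ?thesis by (simp only: of_int_eq_0_iff not_False_eq_True)
  qed
  have coords: "horn_coords bi bj ci cj a
      = (A * fst a + B * snd a + ci, C * fst a + E * snd a + cj)" for a
    by (simp add: horn_coords_def int_dot_def A_def B_def C_def E_def)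
  define g where
    "g x = ((E * (fst x - ci) - B * (snd x - cj)) / d, (A * (snd x - cj) - C * (fst x - ci)) / d)"
    for x
  show "g \<circ> horn_coords bi bj ci cj = id" "horn_coords bi bj ci cj \<circ> g = id"
    unfolding fun_eq_iff comp_apply id_apply coords g_def prod_eq_iff fst_conv snd_conv
    by (simp_all add: field_simps \<open>d \<noteq> 0\<close>) (simp_all add: d_def algebra_simps)
qed

lemma horn_coords_unit_shift:
  "horn_coords bi bj ci cj (unit_shift r a)
     = (fst (horn_coords bi bj ci cj a) - of_int (col r bi),
        snd (horn_coords bi bj ci cj a) - of_int (col r bj))"
  by (simp add: horn_coords_def int_dot_unit_shift)

definition horn_recurrence :: "nat \<Rightarrow> nat \<Rightarrow> puiseux \<Rightarrow> bool" where
  "horn_recurrence m n F \<longleftrightarrow> (\<forall>x. falling_factorial (fst x) m * F x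
     = falling_factorial (snd x + of_nat n) n * F (fst x - of_nat m, snd x + of_nat n))"

lemma horn_recurrence_swap: "horn_recurrence m n (F \<circ> prod.swap) \<longleftrightarrow> horn_recurrence n m F"
  unfolding horn_recurrence_def
proof (intro iffI allI)
  fix x :: "complex \<times> complex"
  assume "\<forall>y. falling_factorial (fst y) m * (F \<circ> prod.swap) y
    = falling_factorial (snd y + of_nat n) n * (F \<circ> prod.swap) (fst y - of_nat m, snd y + of_nat n)"
  from this[rule_format, of "(snd x + of_nat m, fst x - of_nat n)"]
  show "falling_factorial (fst x) n * F x
    = falling_factorial (snd x + of_nat m) m * F (fst x - of_nat n, snd x + of_nat m)"
    by simp
next
  fix x :: "complex \<times> complex"
  assume "\<forall>y. falling_factorial (fst y) n * F y
    = falling_factorial (snd y + of_nat m) m * F (fst y - of_nat n, snd y + of_nat m)"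
  from this[rule_format, of "(snd x + of_nat n, fst x - of_nat m)"]
  show "falling_factorial (fst x) m * (F \<circ> prod.swap) x
    = falling_factorial (snd x + of_nat n) n * (F \<circ> prod.swap) (fst x - of_nat m, snd x + of_nat n)"
    by (cases x) simp
qed

lemma all_surj_iff: "surj f \<Longrightarrow> (\<forall>a. P (f a)) \<longleftrightarrow> (\<forall>x. P x)"
  by (metis surjD)

lemma H_op_eq_0_iff_horn_recurrence_pos_neg:
  assumes "surj (horn_coords bi bj ci cj)" "col r bi > 0" "col r bj < 0"
  shows "H_op [bi, bj] [ci, cj] r (F \<circ> horn_coords bi bj ci cj) = (\<lambda>_. 0)
           \<longleftrightarrow> horn_recurrence (nat (col r bi)) (nat (- col r bj)) F"
proof -
  let ?x = "horn_coords bi bj ci cj"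
  define m n where "m = nat (col r bi)" and "n = nat (- col r bj)"
  have "of_nat m = (of_int (col r bi) :: complex)" "of_nat n = - (of_int (col r bj) :: complex)"
    using assms(2,3) by (simp_all add: m_def n_def)
  then have "H_op [bi, bj] [ci, cj] r (F \<circ> ?x) = (\<lambda>_. 0) \<longleftrightarrow> (\<forall>a.
      falling_factorial (fst (?x a)) m * F (?x a)
      = falling_factorial (snd (?x a) + of_nat n) n
          * F (fst (?x a) - of_nat m, snd (?x a) + of_nat n))"
    unfolding H_op_eq_0_iff Q_P_op_opposite_signs(1,2)[OF assms(2,3)]
    by (simp add: horn_coords_unit_shift int_dot_unit_shift m_def n_def)
      (simp add: horn_coords_def algebra_simps)
  also have "\<dots> \<longleftrightarrow> horn_recurrence m n F"
    unfolding horn_recurrence_def using assms(1) by (rule all_surj_iff)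
  finally show ?thesis
    by (simp add: m_def n_def)
qed

lemma H_op_eq_0_iff_horn_recurrence:
  assumes "surj (horn_coords bi bj ci cj)" "col r bi * col r bj < 0"
  shows "H_op [bi, bj] [ci, cj] r (F \<circ> horn_coords bi bj ci cj) = (\<lambda>_. 0)
           \<longleftrightarrow> horn_recurrence (nat \<bar>col r bi\<bar>) (nat \<bar>col r bj\<bar>) F"
proof (cases "col r bi > 0")
  case True
  then show ?thesis
    using assms H_op_eq_0_iff_horn_recurrence_pos_neg[of bi bj ci cj r F]
    by (simp add: mult_less_0_iff)
next
  case False
  then have signs: "col r bj > 0" "col r bi < 0"
    using assms(2) by (auto simp: mult_less_0_iff)
  have swap: "horn_coords bi bj ci cj = prod.swap \<circ> horn_coords bj bi cj ci"
    by (simp add: horn_coords_def fun_eq_iff)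
  have "horn_coords bj bi cj ci = prod.swap \<circ> horn_coords bi bj ci cj"
    by (simp add: horn_coords_def fun_eq_iff)
  then have "surj (horn_coords bj bi cj ci)"
    using comp_surj[OF assms(1) surj_swap] by simp
  then have "H_op [bj, bi] [cj, ci] r ((F \<circ> prod.swap) \<circ> horn_coords bj bi cj ci) = (\<lambda>_. 0)
      \<longleftrightarrow> horn_recurrence (nat (- col r bi)) (nat (col r bj)) F"
    using H_op_eq_0_iff_horn_recurrence_pos_neg[of bj bi cj ci r "F \<circ> prod.swap"] signs
    by (simp add: horn_recurrence_swap)
  moreover have "H_op [bi, bj] [ci, cj] r = H_op [bj, bi] [cj, ci] r"
    using signs by (rule H_op_swap_rows)
  ultimately show ?thesis
    using signs by (simp add: swap comp_assoc)
qed

section \<open>Finitely supported solutions of the recurrences\<close>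

lemma puiseux_poly_diff: "puiseux_poly F \<Longrightarrow> puiseux_poly G \<Longrightarrow> puiseux_poly (\<lambda>x. F x - G x)"
  unfolding puiseux_poly_def
  by (rule finite_subset[of _ "{x. F x \<noteq> 0} \<union> {x. G x \<noteq> 0}"]) auto

lemma puiseux_poly_sum:
  assumes "finite I" "\<And>i. i \<in> I \<Longrightarrow> puiseux_poly (G i)"
  shows "puiseux_poly (\<lambda>x. \<Sum>i\<in>I. c i * G i x)"
  unfolding puiseux_poly_def
proof (rule finite_subset)
  have "(\<Sum>i\<in>I. c i * G i x) = 0" if "\<forall>i\<in>I. G i x = 0" for x
    using that by (simp add: sum.neutral)
  then show "{x. (\<Sum>i\<in>I. c i * G i x) \<noteq> 0} \<subseteq> (\<Union>i\<in>I. {x. G i x \<noteq> 0})"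
    by blast
  show "finite (\<Union>i\<in>I. {x. G i x \<noteq> 0})"
    using assms unfolding puiseux_poly_def by blast
qed

lemma puiseux_poly_comp_bij: "bij h \<Longrightarrow> puiseux_poly (F \<circ> h) \<longleftrightarrow> puiseux_poly F"
  unfolding puiseux_poly_def using finite_vimage_iff[of h "{x. F x \<noteq> 0}"] by (simp add: vimage_def)

lemma puiseux_poly_no_nonzero_chain:
  assumes "puiseux_poly F" "inj g" "F (g 0) \<noteq> 0" "\<And>k. F (g k) \<noteq> 0 \<Longrightarrow> F (g (Suc k)) \<noteq> 0"
  shows False
proof -
  have "F (g k) \<noteq> 0" for k
    by (induction k) (use assms(3,4) in auto)
  then have "range g \<subseteq> {a. F a \<noteq> 0}" by auto
  then have "finite (range g)"
    using assms(1) unfolding puiseux_poly_def by (rule finite_subset)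
  then show False
    using assms(2) by (simp add: finite_image_iff)
qed

lemma horn_recurrence_diff:
  "horn_recurrence m n F \<Longrightarrow> horn_recurrence m n G \<Longrightarrow> horn_recurrence m n (\<lambda>x. F x - G x)"
  unfolding horn_recurrence_def by (simp add: right_diff_distrib)

lemma horn_recurrence_sum:
  "(\<And>i. i \<in> I \<Longrightarrow> horn_recurrence m n (G i)) \<Longrightarrow> horn_recurrence m n (\<lambda>x. \<Sum>i\<in>I. c i * G i x)"
  unfolding horn_recurrence_def by (simp add: sum_distrib_left mult.left_commute)

definition of_nat_pair :: "nat \<times> nat \<Rightarrow> complex \<times> complex" where
  "of_nat_pair z = (of_nat (fst z), of_nat (snd z))"

lemma of_nat_pair_eq_iff [simp]: "of_nat_pair z = of_nat_pair z' \<longleftrightarrow> z = z'"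
  by (cases z; cases z') (simp add: of_nat_pair_def)

lemma range_of_nat_pair: "range of_nat_pair = \<nat> \<times> \<nat>"
  by (auto simp: of_nat_pair_def image_iff elim!: Nats_cases)

lemma horn_recurrence_nonzero_iff:
  assumes "horn_recurrence m n F" "m \<le> u"
  shows "F (of_nat_pair (u, v)) \<noteq> 0 \<longleftrightarrow> F (of_nat_pair (u - m, v + n)) \<noteq> 0"
proof -
  have "falling_factorial (of_nat u) m * F (of_nat_pair (u, v))
      = falling_factorial (of_nat (v + n)) n * F (of_nat_pair (u - m, v + n))"
    using assms unfolding horn_recurrence_def of_nat_pair_def by auto
  moreover have "falling_factorial (of_nat u) m \<noteq> 0" "falling_factorial (of_nat (v + n)) n \<noteq> 0"
    using assms(2) by (auto simp: falling_factorial_eq_0_iff simp del: of_nat_add)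
  ultimately show ?thesis by auto
qed

text \<open>Off \<open>\<nat>\<close> the falling factorials in the recurrence never vanish, so a nonzero coefficient
  would propagate along an infinite chain.\<close>

lemma horn_recurrence_support_fst:
  assumes "0 < m" "puiseux_poly F" "horn_recurrence m n F" "F x \<noteq> 0"
  shows "fst x \<in> \<nat>"
proof (rule ccontr)
  assume x: "fst x \<notin> \<nat>"
  define g where "g k = (fst x - of_nat (k * m), snd x + of_nat (k * n))" for k
  have not_Nats: "fst (g k) \<notin> \<nat>" for k
    using x Nats_add[of "fst (g k)" "of_nat (k * m)"] by (auto simp: g_def)
  have "falling_factorial (fst (g k)) m \<noteq> 0" for k
    using not_Nats[of k] by (auto simp: falling_factorial_eq_0_iff)
  moreover have "(fst (g k) - of_nat m, snd (g k) + of_nat n) = g (Suc k)" for k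
    by (simp add: g_def algebra_simps)
  ultimately have "F (g k) \<noteq> 0 \<Longrightarrow> F (g (Suc k)) \<noteq> 0" for k
    using assms(3) unfolding horn_recurrence_def by (metis mult_eq_0_iff)
  moreover have "inj g"
    using \<open>0 < m\<close> by (auto intro!: injI simp: g_def)
  moreover have "F (g 0) \<noteq> 0"
    using assms(4) by (simp add: g_def)
  ultimately show False
    using puiseux_poly_no_nonzero_chain[OF assms(2)] by blast
qed

lemma horn_recurrence_support_snd:
  assumes "0 < m" "puiseux_poly F" "horn_recurrence m n F" "F x \<noteq> 0"
  shows "snd x \<in> \<nat>"
proof (rule ccontr)
  assume x: "snd x \<notin> \<nat>"
  define g where "g k = (fst x + of_nat (k * m), snd x - of_nat (k * n))" for k
  have not_Nats: "snd (g k) \<notin> \<nat>" for k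
    using x Nats_add[of "snd (g k)" "of_nat (k * n)"] by (auto simp: g_def)
  have "falling_factorial (snd (g k)) n \<noteq> 0" for k
    using not_Nats[of k] by (auto simp: falling_factorial_eq_0_iff)
  moreover have "(fst (g (Suc k)) - of_nat m, snd (g (Suc k)) + of_nat n) = g k"
    and "snd (g (Suc k)) + of_nat n = snd (g k)" for k
    by (simp_all add: g_def algebra_simps)
  ultimately have "F (g k) \<noteq> 0 \<Longrightarrow> F (g (Suc k)) \<noteq> 0" for k
    using assms(3) unfolding horn_recurrence_def by (metis mult_eq_0_iff)
  moreover have "inj g"
    using \<open>0 < m\<close> by (auto intro!: injI simp: g_def)
  moreover have "F (g 0) \<noteq> 0"
    using assms(4) by (simp add: g_def)
  ultimately show False
    using puiseux_poly_no_nonzero_chain[OF assms(2)] by blast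
qed

lemma horn_recurrence_support:
  "0 < m \<Longrightarrow> puiseux_poly F \<Longrightarrow> horn_recurrence m n F \<Longrightarrow> F x \<noteq> 0 \<Longrightarrow> x \<in> range of_nat_pair"
  using horn_recurrence_support_fst horn_recurrence_support_snd
  by (simp add: range_of_nat_pair mem_Times_iff)

definition factorial_poly :: "(nat \<times> nat) set \<Rightarrow> puiseux" where
  "factorial_poly C x =
     (\<Sum>z\<in>C. if of_nat_pair z = x then 1 / (fact (fst z) * fact (snd z)) else 0)"

lemma factorial_poly_of_nat_pair:
  "finite C \<Longrightarrow> factorial_poly C (of_nat_pair z) =
     (if z \<in> C then 1 / (fact (fst z) * fact (snd z)) else 0)"
  unfolding factorial_poly_def by (simp add: eq_commute[of z])

lemma factorial_poly_outside: "x \<notin> range of_nat_pair \<Longrightarrow> factorial_poly C x = 0"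
  unfolding factorial_poly_def by (rule sum.neutral) auto

lemma puiseux_poly_factorial_poly:
  assumes "finite C"
  shows "puiseux_poly (factorial_poly C)"
proof -
  have "factorial_poly C x = 0" if "x \<notin> of_nat_pair ` C" for x
    using that unfolding factorial_poly_def by (intro sum.neutral) auto
  then have "{x. factorial_poly C x \<noteq> 0} \<subseteq> of_nat_pair ` C"
    by blast
  then show ?thesis
    unfolding puiseux_poly_def using assms by (blast intro: finite_subset)
qed

lemma factorial_poly_recurrence_at_of_nat_pair:
  assumes "finite C" "m \<le> u" "(u, v) \<in> C \<longleftrightarrow> (u - m, v + n) \<in> C"
  shows "falling_factorial (of_nat u) m * factorial_poly C (of_nat_pair (u, v))
           = falling_factorial (of_nat (v + n)) n * factorial_poly C (of_nat_pair (u - m, v + n))"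
proof -
  have "falling_factorial (of_nat u) m = fact u / fact (u - m)"
    using assms(2) by (rule falling_factorial_of_nat)
  moreover have "falling_factorial (of_nat (v + n)) n = fact (v + n) / fact v"
    using falling_factorial_of_nat[of n "v + n"] by simp
  ultimately show ?thesis
    using assms(2,3) by (simp add: factorial_poly_of_nat_pair[OF assms(1)])
qed

lemma factorial_poly_recurrence_sides_eq_0:
  assumes "\<nexists>u v. x = of_nat_pair (u, v) \<and> m \<le> u"
  shows "falling_factorial (fst x) m * factorial_poly C x = 0"
    and "falling_factorial (snd x + of_nat n) n
           * factorial_poly C (fst x - of_nat m, snd x + of_nat n) = 0"
proof -
  show "falling_factorial (fst x) m * factorial_poly C x = 0"
  proof (cases "x \<in> range of_nat_pair")
    case True
    with assms obtain u v where "x = of_nat_pair (u, v)" "u < m"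
      by fastforce
    then show ?thesis
      by (simp add: of_nat_pair_def falling_factorial_eq_0_iff)
  qed (simp add: factorial_poly_outside)
  let ?y = "(fst x - of_nat m, snd x + of_nat n)"
  show "falling_factorial (snd x + of_nat n) n * factorial_poly C ?y = 0"
  proof (cases "?y \<in> range of_nat_pair")
    case True
    then obtain a b where y: "?y = of_nat_pair (a, b)"
      by fastforce
    have "b < n"
    proof (rule ccontr)
      assume "\<not> b < n"
      then have "x = of_nat_pair (a + m, b - n)"
        using y by (cases x) (auto simp: of_nat_pair_def algebra_simps)
      then show False
        using assms by auto
    qed
    then show ?thesis
      using y by (simp add: of_nat_pair_def falling_factorial_eq_0_iff)
  qed (simp add: factorial_poly_outside)
qed

lemma horn_recurrence_factorial_poly:
  assumes "finite C" and closed: "\<And>z. m \<le> fst z \<Longrightarrow> z \<in> C \<longleftrightarrow> (fst z - m, snd z + n) \<in> C"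
  shows "horn_recurrence m n (factorial_poly C)"
  unfolding horn_recurrence_def
proof
  fix x :: "complex \<times> complex"
  let ?y = "(fst x - of_nat m, snd x + of_nat n)"
  show "falling_factorial (fst x) m * factorial_poly C x
          = falling_factorial (snd x + of_nat n) n * factorial_poly C ?y"
  proof (cases "\<exists>u v. x = of_nat_pair (u, v) \<and> m \<le> u")
    case True
    then obtain u v where x: "x = of_nat_pair (u, v)" and "m \<le> u"
      by blast
    have "(u, v) \<in> C \<longleftrightarrow> (u - m, v + n) \<in> C"
      using closed[of "(u, v)"] \<open>m \<le> u\<close> by simp
    moreover have "?y = of_nat_pair (u - m, v + n)"
      using \<open>m \<le> u\<close> by (simp add: x of_nat_pair_def)
    ultimately show ?thesis
      using factorial_poly_recurrence_at_of_nat_pair[OF assms(1) \<open>m \<le> u\<close>]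
      by (simp add: x) (simp add: of_nat_pair_def)
  next
    case False
    then show ?thesis
      by (simp only: factorial_poly_recurrence_sides_eq_0[OF False])
  qed
qed

definition horn_recurrence_solutions :: "nat \<Rightarrow> nat \<Rightarrow> nat \<Rightarrow> nat \<Rightarrow> puiseux set" where
  "horn_recurrence_solutions p r q s
     = {F. puiseux_poly F \<and> horn_recurrence p r F \<and> horn_recurrence q s F}"

lemma horn_recurrence_solutions_commute:
  "horn_recurrence_solutions p r q s = horn_recurrence_solutions q s p r"
  by (auto simp: horn_recurrence_solutions_def)

lemma horn_recurrence_solutions_diff:
  "F \<in> horn_recurrence_solutions p r q s \<Longrightarrow> G \<in> horn_recurrence_solutions p r q s
     \<Longrightarrow> (\<lambda>x. F x - G x) \<in> horn_recurrence_solutions p r q s"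
  by (simp add: horn_recurrence_solutions_def puiseux_poly_diff horn_recurrence_diff)

lemma horn_recurrence_solutions_sum:
  "finite I \<Longrightarrow> (\<And>i. i \<in> I \<Longrightarrow> G i \<in> horn_recurrence_solutions p r q s)
     \<Longrightarrow> (\<lambda>x. \<Sum>i\<in>I. c i * G i x) \<in> horn_recurrence_solutions p r q s"
  by (auto simp: horn_recurrence_solutions_def intro!: puiseux_poly_sum horn_recurrence_sum)

section \<open>Dimension counting\<close>

interpretation puiseux_space: vector_space "\<lambda>(z::complex) (f::puiseux) a. z * f a"
  by unfold_locales (auto simp: fun_eq_iff algebra_simps)

lemma sum_fun_apply: "(\<Sum>i\<in>I. G i) a = (\<Sum>i\<in>I. G i a)"
  by (induction I rule: infinite_finite_induct) auto

lemma independent_if_dual_points: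
  assumes dual: "\<And>i j. i \<in> I \<Longrightarrow> j \<in> I \<Longrightarrow> g i (pt j) \<noteq> 0 \<longleftrightarrow> i = j"
  shows "puiseux_space.independent (g ` I)"
  unfolding puiseux_space.dependent_explicit
proof clarify
  fix T u v
  assume T: "finite T" "T \<subseteq> g ` I" and sum_0: "(\<Sum>w\<in>T. (\<lambda>a. u w * w a)) = 0"
    and "v \<in> T" "u v \<noteq> 0"
  obtain i where i: "i \<in> I" "v = g i"
    using T \<open>v \<in> T\<close> by blast
  have "w (pt i) = 0" if "w \<in> T - {v}" for w
    using that T i dual by fastforce
  then have "(\<Sum>w\<in>T - {v}. u w * w (pt i)) = 0"
    by (intro sum.neutral) simp
  then have "(\<Sum>w\<in>T. u w * w (pt i)) = u v * v (pt i)"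
    using T \<open>v \<in> T\<close> by (simp add: sum.remove)
  moreover have "(\<Sum>w\<in>T. u w * w (pt i)) = 0"
    using fun_cong[OF sum_0, of "pt i"] by (simp add: sum_fun_apply)
  ultimately show False
    using \<open>u v \<noteq> 0\<close> i dual[of i i] by simp
qed

lemma cdim_eq_card_dual_basis:
  assumes "finite I" and g_in_V: "\<And>i. i \<in> I \<Longrightarrow> g i \<in> V"
    and dual: "\<And>i j. i \<in> I \<Longrightarrow> j \<in> I \<Longrightarrow> g i (pt j) \<noteq> 0 \<longleftrightarrow> i = j"
    and spanning: "\<And>f. f \<in> V \<Longrightarrow> \<exists>c. f = (\<lambda>a. \<Sum>i\<in>I. c i * g i a)"
  shows "cdim V = card I"
proof -
  have "V \<subseteq> puiseux_space.span (g ` I)"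
  proof
    fix f assume "f \<in> V"
    then obtain c where "f = (\<lambda>a. \<Sum>i\<in>I. c i * g i a)"
      using spanning by blast
    then have "f = (\<Sum>i\<in>I. (\<lambda>a. c i * g i a))"
      by (simp add: fun_eq_iff sum_fun_apply)
    also have "\<dots> \<in> puiseux_space.span (g ` I)"
      by (intro puiseux_space.span_sum puiseux_space.span_scale puiseux_space.span_base) auto
    finally show "f \<in> puiseux_space.span (g ` I)" .
  qed
  then have "cdim V = card (g ` I)"
    unfolding cdim_def using g_in_V independent_if_dual_points[OF dual]
    by (intro puiseux_space.dim_unique) auto
  moreover have "inj_on g I"
    using dual by (metis inj_onI)
  ultimately show ?thesis
    by (simp add: card_image)
qed

lemma cdim_image_comp_bij:
  assumes "bij h"
  shows "cdim ((\<lambda>F. F \<circ> h) ` V) = cdim V"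
proof -
  define T where "T F = F \<circ> h" for F :: puiseux
  interpret T: Vector_Spaces.linear
    "\<lambda>(z::complex) (f::puiseux) a. z * f a" "\<lambda>(z::complex) (f::puiseux) a. z * f a" T
    by unfold_locales (auto simp: T_def fun_eq_iff)
  have "inj T"
  proof (rule injI)
    fix F G assume "T F = T G"
    then show "F = G"
      using assms unfolding T_def by (metis bij_is_surj comp_assoc comp_id surj_iff)
  qed
  obtain B where B: "B \<subseteq> V" "puiseux_space.independent B" "V \<subseteq> puiseux_space.span B"
    and "card B = cdim V"
    unfolding cdim_def by (rule puiseux_space.basis_exists)
  have "cdim (T ` V) = card (T ` B)"
    unfolding cdim_def
  proof (rule puiseux_space.dim_unique)
    show "T ` V \<subseteq> puiseux_space.span (T ` B)"
      using B(3) by (simp add: T.span_image image_mono)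
    show "puiseux_space.independent (T ` B)"
      using T.independent_injective_image[OF B(2) inj_on_subset[OF \<open>inj T\<close>]] by simp
  qed (use B(1) in auto)
  also have "\<dots> = cdim V"
    using \<open>card B = cdim V\<close> card_image[OF inj_on_subset[OF \<open>inj T\<close>]] by simp
  finally show ?thesis
    by (simp add: T_def[abs_def])
qed

section \<open>The lattice of exponents\<close>

locale horn_lattice =
  fixes p r q s :: nat
  assumes s_pos: "0 < s" and det_less: "p * s < q * r"
begin

lemma q_pos: "0 < q"
  using det_less by (auto intro: gr0I)

definition box :: "(nat \<times> nat) set" where
  "box = {..<p} \<times> {..<s}"

definition lattice_step :: "((nat \<times> nat) \<times> (nat \<times> nat)) set" where
  "lattice_step =
     {(z, (fst z - p, snd z + r)) | z. p \<le> fst z} \<union> {(z, (fst z - q, snd z + s)) | z. q \<le> fst z}"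

definition component :: "nat \<times> nat \<Rightarrow> (nat \<times> nat) set" where
  "component b = (lattice_step \<union> lattice_step\<inverse>)\<^sup>* `` {b}"

lemma self_in_component: "b \<in> component b"
  by (simp add: component_def)

lemma component_step_iff:
  assumes "(z, z') \<in> lattice_step"
  shows "z \<in> component b \<longleftrightarrow> z' \<in> component b"
proof -
  let ?R = "lattice_step \<union> lattice_step\<inverse>"
  have "(z, z') \<in> ?R" "(z', z) \<in> ?R"
    using assms by auto
  then show ?thesis
    unfolding component_def Image_singleton_iff by (meson rtrancl_into_rtrancl)
qed

definition weight :: "nat \<times> nat \<Rightarrow> nat" where
  "weight z = s * fst z + q * snd z"

lemma weight_step_p: "p \<le> u \<Longrightarrow> weight (u, v) < weight (u - p, v + r)"
  using det_less by (auto simp: weight_def algebra_simps dest!: le_Suc_ex)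

lemma weight_step_q: "q \<le> u \<Longrightarrow> weight (u - q, v + s) = weight (u, v)"
  by (auto simp: weight_def algebra_simps dest!: le_Suc_ex)

text \<open>Iterating \<open>descend\<close> funnels the component of a box point into that point
  (\<open>component_descends_to\<close>) without ever decreasing the weight, which bounds the component.\<close>

definition descend :: "nat \<times> nat \<Rightarrow> nat \<times> nat" where
  "descend z = (if s \<le> snd z then (fst z + q, snd z - s)
                else if p \<le> fst z then (fst z - p, snd z + r) else z)"

lemma weight_descend: "weight z \<le> weight (descend z)"
proof -
  obtain u v where z: "z = (u, v)"
    by fastforce
  consider "s \<le> v" | "\<not> s \<le> v" "p \<le> u" | "\<not> s \<le> v" "\<not> p \<le> u"
    by blast
  then show ?thesis
  proof cases
    case 1
    then show ?thesis
      using weight_step_q[of "u + q" "v - s"] by (simp add: z descend_def)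
  next
    case 2
    then show ?thesis
      using weight_step_p[of u v] by (simp add: z descend_def)
  qed (simp add: z descend_def)
qed

lemma weight_funpow_descend: "weight z \<le> weight ((descend ^^ k) z)"
  by (induction k) (auto intro: order_trans weight_descend)

lemma funpow_descend_box: "b \<in> box \<Longrightarrow> (descend ^^ k) b = b"
  by (induction k) (auto simp: box_def descend_def)

definition joinable :: "nat \<times> nat \<Rightarrow> nat \<times> nat \<Rightarrow> bool" where
  "joinable x y \<longleftrightarrow> (\<exists>j k. (descend ^^ j) x = (descend ^^ k) y)"

lemma joinable_sym: "joinable x y \<Longrightarrow> joinable y x"
  unfolding joinable_def by metis

lemma joinable_descend: "joinable (descend x) (descend y) \<Longrightarrow> joinable x y"
  unfolding joinable_def
proof (elim exE)
  fix j k assume "(descend ^^ j) (descend x) = (descend ^^ k) (descend y)"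
  then have "(descend ^^ Suc j) x = (descend ^^ Suc k) y"
    by (simp add: funpow_Suc_right del: funpow.simps)
  then show "\<exists>j k. (descend ^^ j) x = (descend ^^ k) y"
    by blast
qed

lemma joinable_step:
  assumes "(z, z') \<in> lattice_step"
  shows "joinable z z'"
proof -
  have "joinable z (fst z - p, snd z + r)" if "p \<le> fst z" for z
    using that
  proof (induction "snd z" arbitrary: z rule: less_induct)
    case less
    obtain u v where z: "z = (u, v)"
      by fastforce
    show ?case
    proof (cases "s \<le> v")
      case True
      have "joinable (u + q, v - s) (u + q - p, v - s + r)"
        using less.hyps[of "(u + q, v - s)"] less.prems True s_pos by (simp add: z)
      moreover have "descend z = (u + q, v - s)"
        and "descend (fst z - p, snd z + r) = (u + q - p, v - s + r)"
        using True less.prems by (auto simp: z descend_def)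
      ultimately show ?thesis
        using joinable_descend[of z "(fst z - p, snd z + r)"] by simp
    next
      case False
      then have "descend z = (fst z - p, snd z + r)"
        using less.prems by (simp add: z descend_def)
      then show ?thesis
        unfolding joinable_def by (intro exI[of _ "Suc 0"] exI[of _ 0]) simp
    qed
  qed
  moreover have "joinable z (fst z - q, snd z + s)" if "q \<le> fst z" for z
  proof -
    have "descend (fst z - q, snd z + s) = z"
      using that by (simp add: descend_def)
    then show ?thesis
      unfolding joinable_def by (intro exI[of _ 0] exI[of _ "Suc 0"]) simp
  qed
  ultimately show ?thesis
    using assms by (auto simp: lattice_step_def)
qed

lemma component_descends_to:
  assumes "b \<in> box" "z \<in> component b"
  shows "\<exists>k. (descend ^^ k) z = b"
proof -
  have "(b, z) \<in> (lattice_step \<union> lattice_step\<inverse>)\<^sup>*"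
    using assms(2) by (simp add: component_def)
  then show ?thesis
  proof (induction rule: rtrancl_induct)
    case base
    show ?case
      by (metis funpow_0)
  next
    case (step y z)
    then obtain i where i: "(descend ^^ i) y = b"
      by blast
    have "joinable y z"
      using step.hyps(2) by (auto intro: joinable_step joinable_sym)
    then obtain j k where jk: "(descend ^^ j) y = (descend ^^ k) z"
      unfolding joinable_def by blast
    have "(descend ^^ (i + k)) z = (descend ^^ i) ((descend ^^ j) y)"
      by (simp add: funpow_add jk)
    also have "\<dots> = (descend ^^ j) ((descend ^^ i) y)"
      by (metis add.commute comp_apply funpow_add)
    also have "\<dots> = b"
      using i funpow_descend_box[OF assms(1)] by simp
    finally show ?case
      by blast
  qed
qed

lemma finite_component: "b \<in> box \<Longrightarrow> finite (component b)"
proof -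
  assume "b \<in> box"
  have "component b \<subseteq> {..weight b} \<times> {..weight b}"
  proof
    fix z assume "z \<in> component b"
    then obtain k where "(descend ^^ k) z = b"
      using component_descends_to \<open>b \<in> box\<close> by blast
    then have "weight z \<le> weight b"
      using weight_funpow_descend[of z k] by simp
    moreover have "fst z \<le> weight z" "snd z \<le> weight z"
      using s_pos q_pos by (simp_all add: weight_def trans_le_add1 trans_le_add2)
    ultimately show "z \<in> {..weight b} \<times> {..weight b}"
      by (auto simp: mem_Times_iff)
  qed
  then show ?thesis
    by (rule finite_subset) auto
qed

lemma component_inter_box:
  assumes "b \<in> box"
  shows "component b \<inter> box = {b}"
proof
  show "{b} \<subseteq> component b \<inter> box"
    using assms self_in_component by simp
  show "component b \<inter> box \<subseteq> {b}"
  proof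
    fix z assume z: "z \<in> component b \<inter> box"
    then obtain k where "(descend ^^ k) z = b"
      using component_descends_to assms by blast
    then show "z \<in> {b}"
      using funpow_descend_box[of z k] z by simp
  qed
qed


definition box_solution :: "nat \<times> nat \<Rightarrow> puiseux" where
  "box_solution b = factorial_poly (component b)"

lemma box_solution_in_solutions:
  assumes "b \<in> box"
  shows "box_solution b \<in> horn_recurrence_solutions p r q s"
proof -
  have "finite (component b)"
    using assms by (rule finite_component)
  moreover have "(z, (fst z - p, snd z + r)) \<in> lattice_step" if "p \<le> fst z" for z
    using that by (auto simp: lattice_step_def)
  moreover have "(z, (fst z - q, snd z + s)) \<in> lattice_step" if "q \<le> fst z" for z
    using that by (auto simp: lattice_step_def)
  ultimately show ?thesis
    unfolding horn_recurrence_solutions_def box_solution_def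
    by (auto intro!: puiseux_poly_factorial_poly horn_recurrence_factorial_poly component_step_iff)
qed

lemma box_solution_at_box:
  assumes "b \<in> box" "b' \<in> box"
  shows "box_solution b (of_nat_pair b') \<noteq> 0 \<longleftrightarrow> b' = b"
  using component_inter_box[OF assms(1)] assms(2)
  by (auto simp: box_solution_def factorial_poly_of_nat_pair finite_component[OF assms(1)])

lemma finite_step_closed_eq_empty:
  assumes "finite S" "S \<inter> box = {}"
    and step_p: "\<And>u v. p \<le> u \<Longrightarrow> (u, v) \<in> S \<Longrightarrow> (u - p, v + r) \<in> S"
    and step_q: "\<And>u v. s \<le> v \<Longrightarrow> (u, v) \<in> S \<Longrightarrow> (u + q, v - s) \<in> S"
  shows "S = {}"
proof (rule ccontr)
  assume "S \<noteq> {}"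
  \<comment> \<open>The lexicographically largest (weight, first coordinate) on \<open>S\<close> could still be increased.\<close>
  define key where "key z = (weight z, fst z)" for z
  have "Max (key ` S) \<in> key ` S"
    using \<open>finite S\<close> \<open>S \<noteq> {}\<close> by simp
  then obtain u v where uv: "(u, v) \<in> S" and uv_max: "key (u, v) = Max (key ` S)"
    by (metis imageE surj_pair)
  have key_max: "key z \<le> key (u, v)" if "z \<in> S" for z
    unfolding uv_max using \<open>finite S\<close> that by simp
  have "(u, v) \<notin> box"
    using uv assms(2) by blast
  then consider "p \<le> u" | "s \<le> v"
    by (force simp: box_def)
  then show False
  proof cases
    case 1
    then have "key (u, v) < key (u - p, v + r)"
      using weight_step_p by (simp add: key_def)
    then show False
      using key_max step_p[OF 1 uv] by (meson leD)
  next
    case 2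
    then have "key (u, v) < key (u + q, v - s)"
      using weight_step_q[of "u + q" "v - s"] q_pos by (simp add: key_def)
    then show False
      using key_max step_q[OF 2 uv] by (meson leD)
  qed
qed

lemma solution_eq_0_if_vanishes_on_box:
  assumes F: "F \<in> horn_recurrence_solutions p r q s"
    and box_0: "\<And>b. b \<in> box \<Longrightarrow> F (of_nat_pair b) = 0"
  shows "F = (\<lambda>_. 0)"
proof -
  have poly: "puiseux_poly F" and rec_p: "horn_recurrence p r F" and rec_q: "horn_recurrence q s F"
    using F by (simp_all add: horn_recurrence_solutions_def)
  define S where "S = {z. F (of_nat_pair z) \<noteq> 0}"
  have "finite (of_nat_pair -` {x. F x \<noteq> 0})"
    using poly by (intro finite_vimageI) (simp_all add: puiseux_poly_def inj_def)
  have "S = {}"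
  proof (rule finite_step_closed_eq_empty)
    show "finite S"
      using \<open>finite (of_nat_pair -` {x. F x \<noteq> 0})\<close> by (simp add: S_def vimage_def)
    show "S \<inter> box = {}"
      using box_0 by (auto simp: S_def)
    show "(u - p, v + r) \<in> S" if "p \<le> u" "(u, v) \<in> S" for u v
      using that horn_recurrence_nonzero_iff[OF rec_p] by (simp add: S_def)
    show "(u + q, v - s) \<in> S" if "s \<le> v" "(u, v) \<in> S" for u v
      using that horn_recurrence_nonzero_iff[OF rec_q, of "u + q" "v - s"] by (simp add: S_def)
  qed
  show ?thesis
  proof
    fix x
    show "F x = 0"
    proof (rule ccontr)
      assume "F x \<noteq> 0"
      moreover obtain z where "x = of_nat_pair z"
        using horn_recurrence_support[OF q_pos poly rec_q \<open>F x \<noteq> 0\<close>] by blast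
      ultimately have "z \<in> S"
        by (simp add: S_def)
      then show False
        using \<open>S = {}\<close> by simp
    qed
  qed
qed

theorem cdim_horn_recurrence_solutions: "cdim (horn_recurrence_solutions p r q s) = p * s"
proof -
  have "cdim (horn_recurrence_solutions p r q s) = card box"
  proof (rule cdim_eq_card_dual_basis[where g = box_solution and pt = of_nat_pair])
    show "finite box"
      by (simp add: box_def)
  next
    fix F assume F: "F \<in> horn_recurrence_solutions p r q s"
    define c where "c b = F (of_nat_pair b) / box_solution b (of_nat_pair b)" for b
    define G where "G x = (\<Sum>b\<in>box. c b * box_solution b x)" for x
    have "G \<in> horn_recurrence_solutions p r q s"
      unfolding G_def
      by (intro horn_recurrence_solutions_sum) (auto simp: box_def box_solution_in_solutions)
    moreover have "G (of_nat_pair b) = F (of_nat_pair b)" if "b \<in> box" for b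
    proof -
      have "box_solution b' (of_nat_pair b) = 0" if "b' \<in> box - {b}" for b'
        using box_solution_at_box[of b' b] that \<open>b \<in> box\<close> by auto
      then have "(\<Sum>b'\<in>box - {b}. c b' * box_solution b' (of_nat_pair b)) = 0"
        by (intro sum.neutral) simp
      then have "G (of_nat_pair b) = c b * box_solution b (of_nat_pair b)"
        unfolding G_def using that by (subst sum.remove) (auto simp: box_def)
      then show ?thesis
        using box_solution_at_box[OF that that] by (simp add: c_def)
    qed
    ultimately have "(\<lambda>x. F x - G x) = (\<lambda>_. 0)"
      using F by (intro solution_eq_0_if_vanishes_on_box horn_recurrence_solutions_diff) auto
    then show "\<exists>c. F = (\<lambda>x. \<Sum>b\<in>box. c b * box_solution b x)"
      unfolding G_def by (metis (no_types) eq_iff_diff_eq_0)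
  qed (auto simp: box_solution_in_solutions box_solution_at_box)
  then show ?thesis
    by (simp add: box_def)
qed

end

section \<open>The two-row Horn system\<close>

lemma cdim_horn_recurrence_solutions_min:
  assumes "0 < r" "0 < s" "p * s \<noteq> q * r"
  shows "cdim (horn_recurrence_solutions p r q s) = min (p * s) (q * r)"
proof (cases "p * s < q * r")
  case True
  then interpret horn_lattice p r q s
    using assms by unfold_locales
  show ?thesis
    using True cdim_horn_recurrence_solutions by simp
next
  case False
  then have "q * r < p * s"
    using assms(3) by linarith
  then interpret horn_lattice q s p r
    using assms by unfold_locales
  show ?thesis
    using \<open>q * r < p * s\<close> cdim_horn_recurrence_solutions horn_recurrence_solutions_commute by simp
qed

lemma abs_cross_products_neq:
  fixes a b c d :: int
  assumes "a * d - b * c \<noteq> 0" "a * c < 0" "b * d < 0"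
  shows "\<bar>a * d\<bar> \<noteq> \<bar>b * c\<bar>"
proof -
  have "0 < (a * c) * (b * d)"
    using assms(2,3) by (rule mult_neg_neg)
  also have "\<dots> = (a * d) * (b * c)"
    by (simp add: algebra_simps)
  moreover have "x = y" if "0 < x * y" "\<bar>x\<bar> = \<bar>y\<bar>" for x y :: int
    using that by (auto simp: zero_less_mult_iff abs_if)
  ultimately show ?thesis
    using assms(1) by auto
qed

lemma horn_puiseux_solutions_eq_image:
  assumes "bij (horn_coords bi bj ci cj)" "fst bi * fst bj < 0" "snd bi * snd bj < 0"
  shows "horn_puiseux_solutions [bi, bj] [ci, cj] = (\<lambda>F. F \<circ> horn_coords bi bj ci cj) `
           horn_recurrence_solutions (nat \<bar>fst bi\<bar>) (nat \<bar>fst bj\<bar>) (nat \<bar>snd bi\<bar>) (nat \<bar>snd bj\<bar>)"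
    (is "?S = (\<lambda>F. F \<circ> ?\<Phi>) ` ?W")
proof -
  have mem: "F \<circ> ?\<Phi> \<in> ?S \<longleftrightarrow> F \<in> ?W" for F
    using H_op_eq_0_iff_horn_recurrence[of bi bj ci cj _ F] bij_is_surj[OF assms(1)] assms(2,3)
      puiseux_poly_comp_bij[OF assms(1)]
    by (simp add: horn_puiseux_solutions_def horn_recurrence_solutions_def col_def)
  show ?thesis
  proof (intro set_eqI iffI)
    fix f assume "f \<in> ?S"
    moreover have "f = (f \<circ> inv ?\<Phi>) \<circ> ?\<Phi>"
      using assms(1) by (simp add: comp_assoc bij_is_inj)
    ultimately show "f \<in> (\<lambda>F. F \<circ> ?\<Phi>) ` ?W"
      using mem by (metis image_eqI)
  qed (use mem in auto)
qed

theorem lemma6p5: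
  fixes bi bj :: "int \<times> int" and ci cj :: complex
  assumes indep: "fst bi * snd bj - snd bi * fst bj \<noteq> 0"
    and opposite: "fst bi * fst bj < 0" "snd bi * snd bj < 0"
  shows "cdim (horn_puiseux_solutions [bi, bj] [ci, cj])
           = nat (min \<bar>fst bi * snd bj\<bar> \<bar>snd bi * fst bj\<bar>)"
proof -
  define p r q s
    where "p = nat \<bar>fst bi\<bar>" and "r = nat \<bar>fst bj\<bar>" and "q = nat \<bar>snd bi\<bar>" and "s = nat \<bar>snd bj\<bar>"
  have ps: "int (p * s) = \<bar>fst bi * snd bj\<bar>" and qr: "int (q * r) = \<bar>snd bi * fst bj\<bar>"
    by (simp_all add: p_def q_def r_def s_def abs_mult)
  have "bij (horn_coords bi bj ci cj)"
    using indep by (rule bij_horn_coords)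
  then have "cdim (horn_puiseux_solutions [bi, bj] [ci, cj])
      = cdim (horn_recurrence_solutions p r q s)"
    using opposite
    by (simp add: horn_puiseux_solutions_eq_image cdim_image_comp_bij p_def q_def r_def s_def)
  also have "\<dots> = min (p * s) (q * r)"
  proof (rule cdim_horn_recurrence_solutions_min)
    show "0 < r" "0 < s"
      using opposite by (auto simp: r_def s_def)
    show "p * s \<noteq> q * r"
      using abs_cross_products_neq[OF indep opposite] by (metis ps qr)
  qed
  also have "\<dots> = nat (min \<bar>fst bi * snd bj\<bar> \<bar>snd bi * fst bj\<bar>)"
    unfolding ps [symmetric] qr [symmetric] of_nat_min [symmetric] nat_int ..
  finally show ?thesis .
qed

end
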